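(* Let $A$ be a Banach algebra, $\phi\in\Delta(A)$, and $I$ a closed two-sided ideal of $A$ with $\phi|_I\neq0$. If $A$ is approximately left $\phi$-biprojective, then $I$ is approximately left $\phi|_I$-biprojective.
   Context: $\Delta(A)$ is the set of characters of $A$; $A\otimes_pA$ is the projective tensor product with $a\cdot(b\otimes c)=ab\otimes c$, $(b\otimes c)\cdot a=b\otimes ca$, $\pi_A(a\otimes b)=ab$. For a Banach algebra $A$ and $\phi\in\Delta(A)$, $A$ is approximately left $\phi$-biprojective if there is a net $(\rho_\alpha)$ of bounded linear maps $A\to A\otimes_pA$ such that for all $a,x\in A$: $\|a\cdot\rho_\alpha(x)-\rho_\alpha(ax)\|\to0$, $\|\rho_\alpha(xa)-\phi(a)\rho_\alpha(x)\|\to0$, and $\phi(\pi_A(\rho_\alpha(x)))-\phi(x)\to0$. *)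

theory Defs
  imports "HOL-Analysis.Analysis"
begin

text \<open>A complex Banach algebra (not necessarily unital): the type carries a real Banach
algebra structure together with a complex scalar multiplication sc extending scaleR.\<close>

definition cBA :: "(complex \<Rightarrow> 'a::{real_normed_algebra,banach} \<Rightarrow> 'a) \<Rightarrow> bool" where
  "cBA sc \<longleftrightarrow>
     (\<forall>r x. sc (complex_of_real r) x = scaleR r x) \<and>
     (\<forall>c d x. sc (c * d) x = sc c (sc d x)) \<and>
     (\<forall>c x y. sc c (x + y) = sc c x + sc c y) \<and>
     (\<forall>c d x. sc (c + d) x = sc c x + sc d x) \<and>
     (\<forall>c x. norm (sc c x) = cmod c * norm x) \<and>
     (\<forall>c x y. sc c (x * y) = sc c x * y \<and> sc c (x * y) = x * sc c y)"

definition closed_ideal :: "(complex \<Rightarrow> 'a::{real_normed_algebra,banach} \<Rightarrow> 'a) \<Rightarrow> 'a set \<Rightarrow> bool" where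
  "closed_ideal sc I \<longleftrightarrow> closed I \<and> 0 \<in> I \<and>
     (\<forall>x\<in>I. \<forall>y\<in>I. x + y \<in> I) \<and> (\<forall>c. \<forall>x\<in>I. sc c x \<in> I) \<and>
     (\<forall>a. \<forall>x\<in>I. a * x \<in> I \<and> x * a \<in> I)"

text \<open>Characters of the (sub)algebra S: nonzero multiplicative complex-linear functionals on S.
Delta(A) is characters sc UNIV; phi restricted to I is phi considered on the carrier I.\<close>

definition characters :: "(complex \<Rightarrow> 'a::{real_normed_algebra,banach} \<Rightarrow> 'a) \<Rightarrow> 'a set \<Rightarrow> ('a \<Rightarrow> complex) set" where
  "characters sc S = {\<phi>.
     (\<forall>x\<in>S. \<forall>y\<in>S. \<phi> (x + y) = \<phi> x + \<phi> y) \<and>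
     (\<forall>c. \<forall>x\<in>S. \<phi> (sc c x) = c * \<phi> x) \<and>
     (\<forall>x\<in>S. \<forall>y\<in>S. \<phi> (x * y) = \<phi> x * \<phi> y) \<and>
     (\<exists>x\<in>S. \<phi> x \<noteq> 0)}"

text \<open>Bounded complex-bilinear forms on S x S (extended by 0 outside S). These form the
dual of the projective tensor product S \<otimes>_p S.\<close>

definition bilforms :: "(complex \<Rightarrow> 'a::{real_normed_algebra,banach} \<Rightarrow> 'a) \<Rightarrow> 'a set \<Rightarrow> ('a \<Rightarrow> 'a \<Rightarrow> complex) set" where
  "bilforms sc S = {B.
     (\<forall>x1\<in>S. \<forall>x2\<in>S. \<forall>y\<in>S. B (x1 + x2) y = B x1 y + B x2 y) \<and>
     (\<forall>x\<in>S. \<forall>y1\<in>S. \<forall>y2\<in>S. B x (y1 + y2) = B x y1 + B x y2) \<and>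
     (\<forall>c. \<forall>x\<in>S. \<forall>y\<in>S. B (sc c x) y = c * B x y \<and> B x (sc c y) = c * B x y) \<and>
     (\<exists>K. \<forall>x\<in>S. \<forall>y\<in>S. cmod (B x y) \<le> K * norm x * norm y) \<and>
     (\<forall>x y. x \<notin> S \<or> y \<notin> S \<longrightarrow> B x y = 0)}"

definition bilball :: "(complex \<Rightarrow> 'a::{real_normed_algebra,banach} \<Rightarrow> 'a) \<Rightarrow> 'a set \<Rightarrow> ('a \<Rightarrow> 'a \<Rightarrow> complex) set" where
  "bilball sc S = {B \<in> bilforms sc S. \<forall>x\<in>S. \<forall>y\<in>S. cmod (B x y) \<le> norm x * norm y}"

text \<open>Representations of elements of S \<otimes>_p S: u = sum a n \<otimes> b n with
sum norm (a n) * norm (b n) finite.\<close>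

definition ptrep :: "(complex \<Rightarrow> 'a::{real_normed_algebra,banach} \<Rightarrow> 'a) \<Rightarrow> 'a set
     \<Rightarrow> (('a \<Rightarrow> 'a \<Rightarrow> complex) \<Rightarrow> complex) \<Rightarrow> (nat \<Rightarrow> 'a) \<Rightarrow> (nat \<Rightarrow> 'a) \<Rightarrow> bool" where
  "ptrep sc S u a b \<longleftrightarrow> (\<forall>n. a n \<in> S \<and> b n \<in> S) \<and> summable (\<lambda>n. norm (a n) * norm (b n)) \<and>
     (\<forall>B\<in>bilforms sc S. u B = (\<Sum>n. B (a n) (b n)))"

text \<open>The completed projective tensor product S \<otimes>_p S, realised (via its canonical
isometric embedding into the bidual) as functionals on bounded bilinear forms.\<close>

definition ptensor :: "(complex \<Rightarrow> 'a::{real_normed_algebra,banach} \<Rightarrow> 'a) \<Rightarrow> 'a set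
     \<Rightarrow> (('a \<Rightarrow> 'a \<Rightarrow> complex) \<Rightarrow> complex) set" where
  "ptensor sc S = {u. (\<exists>a b. ptrep sc S u a b) \<and> (\<forall>B. B \<notin> bilforms sc S \<longrightarrow> u B = 0)}"

text \<open>Projective norm (equal, by duality, to inf of sum norm a n * norm b n).\<close>

definition ptnorm :: "(complex \<Rightarrow> 'a::{real_normed_algebra,banach} \<Rightarrow> 'a) \<Rightarrow> 'a set
     \<Rightarrow> (('a \<Rightarrow> 'a \<Rightarrow> complex) \<Rightarrow> complex) \<Rightarrow> real" where
  "ptnorm sc S u = (SUP B\<in>bilball sc S. cmod (u B))"

definition ptdiff :: "(('a \<Rightarrow> 'a \<Rightarrow> complex) \<Rightarrow> complex) \<Rightarrow> (('a \<Rightarrow> 'a \<Rightarrow> complex) \<Rightarrow> complex)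
     \<Rightarrow> (('a \<Rightarrow> 'a \<Rightarrow> complex) \<Rightarrow> complex)" where
  "ptdiff u v = (\<lambda>B. u B - v B)"

text \<open>Module actions: a \<cdot> (b \<otimes> c) = ab \<otimes> c and (b \<otimes> c) \<cdot> a = b \<otimes> ca.\<close>

definition lmod :: "(complex \<Rightarrow> 'a::{real_normed_algebra,banach} \<Rightarrow> 'a) \<Rightarrow> 'a set \<Rightarrow> 'a
     \<Rightarrow> (('a \<Rightarrow> 'a \<Rightarrow> complex) \<Rightarrow> complex) \<Rightarrow> (('a \<Rightarrow> 'a \<Rightarrow> complex) \<Rightarrow> complex)" where
  "lmod sc S a u = (\<lambda>B. if B \<in> bilforms sc S
       then u (\<lambda>y z. if y \<in> S \<and> z \<in> S then B (a * y) z else 0) else 0)"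

definition rmod :: "(complex \<Rightarrow> 'a::{real_normed_algebra,banach} \<Rightarrow> 'a) \<Rightarrow> 'a set
     \<Rightarrow> (('a \<Rightarrow> 'a \<Rightarrow> complex) \<Rightarrow> complex) \<Rightarrow> 'a \<Rightarrow> (('a \<Rightarrow> 'a \<Rightarrow> complex) \<Rightarrow> complex)" where
  "rmod sc S u a = (\<lambda>B. if B \<in> bilforms sc S
       then u (\<lambda>y z. if y \<in> S \<and> z \<in> S then B y (z * a) else 0) else 0)"

definition tpi :: "(complex \<Rightarrow> 'a::{real_normed_algebra,banach} \<Rightarrow> 'a) \<Rightarrow> 'a set
     \<Rightarrow> (('a \<Rightarrow> 'a \<Rightarrow> complex) \<Rightarrow> complex) \<Rightarrow> 'a" where
  "tpi sc S u = (let r = (SOME r. ptrep sc S u (fst r) (snd r)) in (\<Sum>n. fst r n * snd r n))"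

definition bdd_lin_pt :: "(complex \<Rightarrow> 'a::{real_normed_algebra,banach} \<Rightarrow> 'a) \<Rightarrow> 'a set
     \<Rightarrow> ('a \<Rightarrow> (('a \<Rightarrow> 'a \<Rightarrow> complex) \<Rightarrow> complex)) \<Rightarrow> bool" where
  "bdd_lin_pt sc S \<rho> \<longleftrightarrow> (\<forall>x\<in>S. \<rho> x \<in> ptensor sc S) \<and>
     (\<forall>x\<in>S. \<forall>y\<in>S. \<rho> (x + y) = (\<lambda>B. \<rho> x B + \<rho> y B)) \<and>
     (\<forall>c. \<forall>x\<in>S. \<rho> (sc c x) = (\<lambda>B. c * \<rho> x B)) \<and>
     (\<exists>K. \<forall>x\<in>S. ptnorm sc S (\<rho> x) \<le> K * norm x)"

text \<open>Approximate left phi-biprojectivity of the Banach algebra S (S = UNIV for A itself, S = I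
for an ideal, with phi then meaning its restriction to I). The net (rho_alpha) is represented
by a proper filter F on the space of maps (a net is its pushforward tail filter).\<close>

definition approx_left_biproj :: "(complex \<Rightarrow> 'a::{real_normed_algebra,banach} \<Rightarrow> 'a) \<Rightarrow> 'a set
     \<Rightarrow> ('a \<Rightarrow> complex) \<Rightarrow> bool" where
  "approx_left_biproj sc S \<phi> \<longleftrightarrow>
     (\<exists>F :: ('a \<Rightarrow> (('a \<Rightarrow> 'a \<Rightarrow> complex) \<Rightarrow> complex)) filter.
        F \<noteq> bot \<and> eventually (bdd_lin_pt sc S) F \<and>
        (\<forall>a\<in>S. \<forall>x\<in>S.
           ((\<lambda>\<rho>. ptnorm sc S (ptdiff (lmod sc S a (\<rho> x)) (\<rho> (a * x)))) \<longlongrightarrow> 0) F \<and>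
           ((\<lambda>\<rho>. ptnorm sc S (ptdiff (\<rho> (x * a)) (\<lambda>B. \<phi> a * \<rho> x B))) \<longlongrightarrow> 0) F \<and>
           ((\<lambda>\<rho>. \<phi> (tpi sc S (\<rho> x)) - \<phi> x) \<longlongrightarrow> 0) F))"

end

theory Submission
  imports Defs
begin

text \<open>Pick e \<in> I with \<phi> e = 1. The map T: a \<otimes> b \<mapsto> a e \<otimes> e b sends A \<otimes>_p A
  boundedly into I \<otimes>_p I, commutes with the left action of I and with linear combinations,
  and preserves \<phi> \<circ> \<pi>, because \<phi> (a e e b) = \<phi> a \<phi> b. Composing a net that witnesses
  approximate left \<phi>-biprojectivity of A with T therefore gives such a net for I. With tensors
  realised as functionals on bounded bilinear forms, T is dual to pulling a form on I back along
  (y, z) \<mapsto> (y e, e z). Characters are contractive (Neumann series), so \<phi> commutes with the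
  series defining \<pi>.\<close>

lemma
  assumes "cBA sc"
  shows cBA_of_real: "sc (complex_of_real r) x = r *\<^sub>R x"
    and cBA_mult_left: "sc c (x * y) = sc c x * y"
    and cBA_mult_right: "sc c (x * y) = x * sc c y"
  using assms unfolding cBA_def by blast+

lemma
  assumes "\<phi> \<in> characters sc UNIV"
  shows character_add: "\<phi> (x + y) = \<phi> x + \<phi> y"
    and character_scale: "\<phi> (sc c x) = c * \<phi> x"
    and character_mult: "\<phi> (x * y) = \<phi> x * \<phi> y"
  using assms by (simp_all add: characters_def)

lemma character_zero: "\<phi> \<in> characters sc UNIV \<Longrightarrow> \<phi> 0 = 0"
  using character_add[of \<phi> sc 0 0] by simp

text \<open>If cmod (\<phi> x) > norm x, then y = x / \<phi> x has norm < 1 and \<phi> y = 1; the Neumann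
  series z = y + y^2 + y^3 + \<dots> satisfies z = y + y z, whence \<phi> z = 1 + \<phi> z.\<close>

lemma character_norm_le:
  assumes sc: "cBA sc" and \<phi>: "\<phi> \<in> characters sc UNIV"
  shows "cmod (\<phi> x) \<le> norm x"
proof (rule ccontr)
  assume "\<not> cmod (\<phi> x) \<le> norm x"
  hence lt: "norm x < cmod (\<phi> x)" and "\<phi> x \<noteq> 0" by auto
  define y where "y = sc (1 / \<phi> x) x"
  have \<phi>y: "\<phi> y = 1"
    using \<open>\<phi> x \<noteq> 0\<close> by (simp add: y_def character_scale[OF \<phi>])
  have "norm y < 1"
    using sc lt \<open>\<phi> x \<noteq> 0\<close> by (simp add: y_def cBA_def norm_divide field_simps)
  define p where "p n = ((\<lambda>z. y * z) ^^ n) y" for n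
  have p_Suc: "p (Suc n) = y * p n" for n
    by (simp add: p_def)
  have p_le: "norm (p n) \<le> norm y ^ Suc n" for n
  proof (induction n)
    case 0
    then show ?case by (simp add: p_def)
  next
    case (Suc n)
    have "norm (p (Suc n)) \<le> norm y * norm (p n)"
      by (simp add: p_Suc norm_mult_ineq)
    also have "\<dots> \<le> norm y * norm y ^ Suc n"
      using Suc by (simp add: mult_left_mono)
    finally show ?case by simp
  qed
  have "summable (\<lambda>n. norm y ^ Suc n)"
    using \<open>norm y < 1\<close> by (simp add: summable_mult summable_geometric)
  hence p_summable: "summable p"
    by (rule summable_comparison_test[rotated]) (use p_le in auto)
  define z where "z = suminf p"
  have "(\<Sum>n. p (Suc n)) = z - y"
    using suminf_split_head[OF p_summable] by (simp add: z_def p_def)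
  moreover have "(\<Sum>n. p (Suc n)) = y * z"
    unfolding p_Suc z_def by (rule suminf_mult[OF p_summable])
  ultimately have "z = y + y * z"
    by (simp add: algebra_simps)
  hence "\<phi> z = \<phi> y + \<phi> y * \<phi> z"
    by (metis character_add[OF \<phi>] character_mult[OF \<phi>])
  thus False
    using \<phi>y by simp
qed

lemma character_bounded_linear:
  assumes sc: "cBA sc" and \<phi>: "\<phi> \<in> characters sc UNIV"
  shows "bounded_linear \<phi>"
proof (rule bounded_linear_intro[where K = 1])
  show "\<phi> (r *\<^sub>R x) = r *\<^sub>R \<phi> x" for r x
    using character_scale[OF \<phi>, of "complex_of_real r" x] cBA_of_real[OF sc]
    by (simp add: scaleR_conv_of_real)
qed (use character_add[OF \<phi>] character_norm_le[OF sc \<phi>] in auto)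

lemma
  assumes "closed_ideal sc S" and "x \<in> S"
  shows closed_ideal_add: "y \<in> S \<Longrightarrow> x + y \<in> S"
    and closed_ideal_scale: "sc c x \<in> S"
    and closed_ideal_mult_left: "a * x \<in> S"
    and closed_ideal_mult_right: "x * a \<in> S"
  using assms unfolding closed_ideal_def by blast+

lemma closed_ideal_UNIV: "closed_ideal sc UNIV"
  unfolding closed_ideal_def by simp

lemma
  assumes "B \<in> bilforms sc S"
  shows bilforms_add_left: "\<lbrakk>x1 \<in> S; x2 \<in> S; y \<in> S\<rbrakk> \<Longrightarrow> B (x1 + x2) y = B x1 y + B x2 y"
    and bilforms_add_right: "\<lbrakk>x \<in> S; y1 \<in> S; y2 \<in> S\<rbrakk> \<Longrightarrow> B x (y1 + y2) = B x y1 + B x y2"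
    and bilforms_scale_left: "\<lbrakk>x \<in> S; y \<in> S\<rbrakk> \<Longrightarrow> B (sc c x) y = c * B x y"
    and bilforms_scale_right: "\<lbrakk>x \<in> S; y \<in> S\<rbrakk> \<Longrightarrow> B x (sc c y) = c * B x y"
  using assms unfolding bilforms_def by blast+

lemma bilforms_bound_nonneg:
  assumes "B \<in> bilforms sc S"
  obtains K where "K \<ge> 0" "\<And>x y. x \<in> S \<Longrightarrow> y \<in> S \<Longrightarrow> cmod (B x y) \<le> K * norm x * norm y"
proof -
  obtain K where K: "\<forall>x\<in>S. \<forall>y\<in>S. cmod (B x y) \<le> K * norm x * norm y"
    using assms unfolding bilforms_def by blast
  have "cmod (B x y) \<le> max K 0 * norm x * norm y" if "x \<in> S" "y \<in> S" for x y
  proof -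
    have "cmod (B x y) \<le> K * norm x * norm y"
      using K that by blast
    also have "\<dots> \<le> max K 0 * norm x * norm y"
      by (intro mult_right_mono) auto
    finally show ?thesis .
  qed
  thus thesis
    by (intro that[of "max K 0"]) auto
qed

lemma bilformsI:
  assumes "\<And>x1 x2 y. \<lbrakk>x1 \<in> S; x2 \<in> S; y \<in> S\<rbrakk> \<Longrightarrow> B (x1 + x2) y = B x1 y + B x2 y"
    and "\<And>x y1 y2. \<lbrakk>x \<in> S; y1 \<in> S; y2 \<in> S\<rbrakk> \<Longrightarrow> B x (y1 + y2) = B x y1 + B x y2"
    and "\<And>c x y. \<lbrakk>x \<in> S; y \<in> S\<rbrakk> \<Longrightarrow> B (sc c x) y = c * B x y"
    and "\<And>c x y. \<lbrakk>x \<in> S; y \<in> S\<rbrakk> \<Longrightarrow> B x (sc c y) = c * B x y"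
    and "\<And>x y. \<lbrakk>x \<in> S; y \<in> S\<rbrakk> \<Longrightarrow> cmod (B x y) \<le> K * norm x * norm y"
    and "\<And>x y. x \<notin> S \<or> y \<notin> S \<Longrightarrow> B x y = 0"
  shows "B \<in> bilforms sc S"
  unfolding bilforms_def using assms by blast

lemma zero_in_bilball: "(\<lambda>x y. 0) \<in> bilball sc S"
  unfolding bilball_def bilforms_def by (auto intro!: exI[of _ 0])

lemma ptensor_ptrep: "u \<in> ptensor sc S \<Longrightarrow> \<exists>a b. ptrep sc S u a b"
  unfolding ptensor_def by blast

lemma ptrep_summable_norm:
  assumes u: "ptrep sc S u a b" and B: "B \<in> bilforms sc S"
    and K: "\<And>y z. \<lbrakk>y \<in> S; z \<in> S\<rbrakk> \<Longrightarrow> cmod (B y z) \<le> K * norm y * norm z"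
  shows "summable (\<lambda>n. norm (B (a n) (b n)))"
    and "cmod (u B) \<le> K * (\<Sum>n. norm (a n) * norm (b n))"
proof -
  have ab: "a n \<in> S" "b n \<in> S" for n
    using u unfolding ptrep_def by auto
  have s: "summable (\<lambda>n. norm (a n) * norm (b n))" and uB: "u B = (\<Sum>n. B (a n) (b n))"
    using u B unfolding ptrep_def by auto
  have le: "norm (B (a n) (b n)) \<le> K * (norm (a n) * norm (b n))" for n
    using K[OF ab] by (simp add: mult.assoc)
  have sK: "summable (\<lambda>n. K * (norm (a n) * norm (b n)))"
    using s by (rule summable_mult)
  show sn: "summable (\<lambda>n. norm (B (a n) (b n)))"
    by (rule summable_comparison_test[OF _ sK]) (use le in auto)
  have "cmod (u B) \<le> (\<Sum>n. norm (B (a n) (b n)))"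
    unfolding uB by (rule summable_norm[OF sn])
  also have "\<dots> \<le> (\<Sum>n. K * (norm (a n) * norm (b n)))"
    by (rule suminf_le[OF le sn sK])
  also have "\<dots> = K * (\<Sum>n. norm (a n) * norm (b n))"
    by (rule suminf_mult[OF s])
  finally show "cmod (u B) \<le> K * (\<Sum>n. norm (a n) * norm (b n))" .
qed

lemma ptrep_summable:
  assumes u: "ptrep sc S u a b" and B: "B \<in> bilforms sc S"
  shows "summable (\<lambda>n. B (a n) (b n))"
proof -
  obtain K where "\<And>y z. \<lbrakk>y \<in> S; z \<in> S\<rbrakk> \<Longrightarrow> cmod (B y z) \<le> K * norm y * norm z"
    using bilforms_bound_nonneg[OF B] by blast
  thus ?thesis
    by (rule summable_norm_cancel[OF ptrep_summable_norm(1)[OF u B]])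
qed

lemma ptrep_divide:
  assumes u: "ptrep sc S u a b" and B: "B \<in> bilforms sc S"
    and Bk: "(\<lambda>y z. B y z / k) \<in> bilforms sc S"
  shows "u (\<lambda>y z. B y z / k) = u B / k"
proof -
  have "u (\<lambda>y z. B y z / k) = (\<Sum>n. B (a n) (b n) / k)"
    using u Bk unfolding ptrep_def by auto
  also have "\<dots> = (\<Sum>n. B (a n) (b n)) / k"
    by (rule suminf_divide[OF ptrep_summable[OF u B]])
  also have "\<dots> = u B / k"
    using u B unfolding ptrep_def by auto
  finally show ?thesis .
qed

text \<open>Outside this class ptnorm, a supremum over an unbounded set, has no meaning.\<close>

definition pt_bounded :: "(complex \<Rightarrow> 'a::{real_normed_algebra,banach} \<Rightarrow> 'a) \<Rightarrow> 'a set
     \<Rightarrow> (('a \<Rightarrow> 'a \<Rightarrow> complex) \<Rightarrow> complex) \<Rightarrow> bool" where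
  "pt_bounded sc S w \<longleftrightarrow> (\<exists>M. \<forall>B\<in>bilball sc S. cmod (w B) \<le> M)"

lemma ptnorm_upper: "pt_bounded sc S w \<Longrightarrow> B \<in> bilball sc S \<Longrightarrow> cmod (w B) \<le> ptnorm sc S w"
  unfolding ptnorm_def pt_bounded_def by (auto intro!: cSUP_upper bdd_aboveI2)

lemma ptnorm_least: "(\<And>B. B \<in> bilball sc S \<Longrightarrow> cmod (w B) \<le> M) \<Longrightarrow> ptnorm sc S w \<le> M"
  unfolding ptnorm_def using zero_in_bilball by (intro cSUP_least) auto

lemma ptnorm_nonneg: "pt_bounded sc S w \<Longrightarrow> 0 \<le> ptnorm sc S w"
  using ptnorm_upper[OF _ zero_in_bilball] by (meson norm_ge_zero order_trans)

lemma pt_bounded_ptensor: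
  assumes "u \<in> ptensor sc S"
  shows "pt_bounded sc S u"
proof -
  obtain a b where u: "ptrep sc S u a b"
    using ptensor_ptrep[OF assms] by blast
  have "cmod (u B) \<le> 1 * (\<Sum>n. norm (a n) * norm (b n))" if "B \<in> bilball sc S" for B
    using that unfolding bilball_def by (intro ptrep_summable_norm(2)[OF u]) auto
  thus ?thesis
    unfolding pt_bounded_def by blast
qed

lemma pt_bounded_diff: "pt_bounded sc S u \<Longrightarrow> pt_bounded sc S v \<Longrightarrow> pt_bounded sc S (ptdiff u v)"
  unfolding pt_bounded_def ptdiff_def by (meson norm_triangle_le_diff add_mono)

lemma pt_bounded_scale: "pt_bounded sc S u \<Longrightarrow> pt_bounded sc S (\<lambda>B. c * u B)"
  unfolding pt_bounded_def by (metis norm_mult mult_left_mono norm_ge_zero)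

lemma lmod_form_bilforms:
  assumes sc: "cBA sc" and S: "closed_ideal sc S" and a: "a \<in> S" and B: "B \<in> bilforms sc S"
  shows "(\<lambda>y z. if y \<in> S \<and> z \<in> S then B (a * y) z else 0) \<in> bilforms sc S"
proof -
  obtain K where K: "K \<ge> 0" "\<And>x y. \<lbrakk>x \<in> S; y \<in> S\<rbrakk> \<Longrightarrow> cmod (B x y) \<le> K * norm x * norm y"
    using bilforms_bound_nonneg[OF B] by blast
  have ay: "a * y \<in> S" for y
    using closed_ideal_mult_right[OF S a] .
  have "cmod (B (a * x) y) \<le> K * norm a * norm x * norm y" if "y \<in> S" for x y
  proof -
    have "cmod (B (a * x) y) \<le> K * norm (a * x) * norm y"
      using K(2) ay that by blast
    also have "\<dots> \<le> K * (norm a * norm x) * norm y"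
      using K(1) by (intro mult_mono mult_left_mono norm_mult_ineq) auto
    finally show ?thesis
      by (simp add: mult.assoc)
  qed
  thus ?thesis
    by (intro bilformsI[where K = "K * norm a"])
      (auto simp: ay closed_ideal_add[OF S] closed_ideal_scale[OF S] distrib_left
        bilforms_add_left[OF B] bilforms_add_right[OF B] bilforms_scale_left[OF B]
        bilforms_scale_right[OF B] cBA_mult_right[OF sc, symmetric])
qed

lemma pt_bounded_lmod:
  assumes sc: "cBA sc" and S: "closed_ideal sc S" and a: "a \<in> S" and u: "u \<in> ptensor sc S"
  shows "pt_bounded sc S (lmod sc S a u)"
proof -
  obtain p q where u: "ptrep sc S u p q"
    using ptensor_ptrep[OF u] by blast
  have "cmod (lmod sc S a u B) \<le> norm a * (\<Sum>n. norm (p n) * norm (q n))"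
    if B: "B \<in> bilball sc S" for B
  proof -
    have Bf: "B \<in> bilforms sc S" and Bb: "\<And>y z. \<lbrakk>y \<in> S; z \<in> S\<rbrakk> \<Longrightarrow> cmod (B y z) \<le> norm y * norm z"
      using B unfolding bilball_def by auto
    have "cmod (B (a * y) z) \<le> norm a * norm y * norm z" if "z \<in> S" for y z
      using Bb[OF closed_ideal_mult_right[OF S a, of y] that]
        mult_right_mono[OF norm_mult_ineq[of a y] norm_ge_zero[of z]] by linarith
    thus ?thesis
      using Bf by (simp add: lmod_def ptrep_summable_norm(2)[OF u lmod_form_bilforms[OF sc S a Bf]])
  qed
  thus ?thesis
    unfolding pt_bounded_def by blast
qed

lemma norm_mult_sandwich_le:
  fixes e y z :: "'a::real_normed_algebra"
  shows "norm (y * e) * norm (e * z) \<le> (norm e)\<^sup>2 * (norm y * norm z)"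
proof -
  have "norm (y * e) * norm (e * z) \<le> (norm y * norm e) * (norm e * norm z)"
    by (intro mult_mono norm_mult_ineq) auto
  thus ?thesis
    by (simp add: power2_eq_square algebra_simps)
qed

text \<open>The factor 1 / (norm e)^2 keeps the unit ball of forms on I inside the unit ball of forms
  on A; pt_compress multiplies it back, so its norm estimate needs only boundedness of the
  functional, not linearity.\<close>

definition pullback_form :: "'a::real_normed_algebra \<Rightarrow> ('a \<Rightarrow> 'a \<Rightarrow> complex) \<Rightarrow> 'a \<Rightarrow> 'a \<Rightarrow> complex" where
  "pullback_form e B = (\<lambda>y z. B (y * e) (e * z) / complex_of_real ((norm e)\<^sup>2))"

definition pt_compress :: "(complex \<Rightarrow> 'a::{real_normed_algebra,banach} \<Rightarrow> 'a) \<Rightarrow> 'a set \<Rightarrow> 'a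
     \<Rightarrow> (('a \<Rightarrow> 'a \<Rightarrow> complex) \<Rightarrow> complex) \<Rightarrow> (('a \<Rightarrow> 'a \<Rightarrow> complex) \<Rightarrow> complex)" where
  "pt_compress sc I e u = (\<lambda>B. if B \<in> bilforms sc I
     then complex_of_real ((norm e)\<^sup>2) * u (pullback_form e B) else 0)"

lemma pullback_form_le:
  assumes "e \<noteq> 0" and "cmod (B (y * e) (e * z)) \<le> K * (norm (y * e) * norm (e * z))" and "K \<ge> 0"
  shows "cmod (pullback_form e B y z) \<le> K * norm y * norm z"
proof -
  have "cmod (B (y * e) (e * z)) \<le> K * ((norm e)\<^sup>2 * (norm y * norm z))"
    using assms(2) mult_left_mono[OF norm_mult_sandwich_le[of y e z] assms(3)] by linarith
  thus ?thesis
    using assms(1) by (simp add: pullback_form_def norm_divide pos_divide_le_eq algebra_simps del: of_real_power)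
qed

lemma pullback_form_bilforms:
  assumes sc: "cBA sc" and I: "closed_ideal sc I" and e: "e \<in> I" "e \<noteq> 0"
    and B: "B \<in> bilforms sc I"
  shows "pullback_form e B \<in> bilforms sc UNIV"
proof -
  obtain K where K: "K \<ge> 0" "\<And>x y. \<lbrakk>x \<in> I; y \<in> I\<rbrakk> \<Longrightarrow> cmod (B x y) \<le> K * norm x * norm y"
    using bilforms_bound_nonneg[OF B] by blast
  have ye: "y * e \<in> I" and ez: "e * y \<in> I" for y
    using closed_ideal_mult_left[OF I e(1)] closed_ideal_mult_right[OF I e(1)] by auto
  show ?thesis
  proof (rule bilformsI[where K = K])
    show "cmod (pullback_form e B y z) \<le> K * norm y * norm z" for y z
      using K ye ez by (intro pullback_form_le[OF e(2)]) (auto simp: mult.assoc)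
  qed (auto simp: pullback_form_def ye ez distrib_left distrib_right add_divide_distrib
         bilforms_add_left[OF B] bilforms_add_right[OF B] bilforms_scale_left[OF B]
         bilforms_scale_right[OF B] cBA_mult_left[OF sc, symmetric] cBA_mult_right[OF sc, symmetric])
qed

lemma pullback_form_bilball:
  assumes sc: "cBA sc" and I: "closed_ideal sc I" and e: "e \<in> I" "e \<noteq> 0"
    and B: "B \<in> bilball sc I"
  shows "pullback_form e B \<in> bilball sc UNIV"
proof -
  have "cmod (pullback_form e B y z) \<le> 1 * norm y * norm z" for y z
    using B closed_ideal_mult_left[OF I e(1)] closed_ideal_mult_right[OF I e(1)]
    by (intro pullback_form_le[OF e(2)]) (auto simp: bilball_def)
  thus ?thesis
    using B pullback_form_bilforms[OF sc I e] unfolding bilball_def by auto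
qed

lemma pt_compress_ptensor:
  assumes sc: "cBA sc" and I: "closed_ideal sc I" and e: "e \<in> I" "e \<noteq> 0"
    and u: "u \<in> ptensor sc UNIV"
  shows "pt_compress sc I e u \<in> ptensor sc I"
proof -
  obtain a b where u: "ptrep sc UNIV u a b"
    using ptensor_ptrep[OF u] by blast
  define k where "k = complex_of_real ((norm e)\<^sup>2)"
  have "k \<noteq> 0"
    using e by (simp add: k_def)
  have summable: "summable (\<lambda>n. norm (a n) * norm (b n))"
    using u unfolding ptrep_def by auto
  have "summable (\<lambda>n. norm (a n * e) * norm (e * b n))"
    by (rule summable_comparison_test[OF _ summable_mult[OF summable]])
      (auto intro: norm_mult_sandwich_le)
  moreover have "pt_compress sc I e u B = (\<Sum>n. B (a n * e) (e * b n))"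
    if B: "B \<in> bilforms sc I" for B
  proof -
    have Bk: "pullback_form e B \<in> bilforms sc UNIV"
      by (rule pullback_form_bilforms[OF sc I e B])
    have "pt_compress sc I e u B = k * (\<Sum>n. B (a n * e) (e * b n) / k)"
      using B u Bk unfolding pt_compress_def ptrep_def pullback_form_def k_def by (simp del: of_real_power)
    also have "\<dots> = (\<Sum>n. B (a n * e) (e * b n))"
      using ptrep_summable[OF u Bk] \<open>k \<noteq> 0\<close>
      by (simp add: suminf_mult[symmetric] pullback_form_def k_def del: of_real_power)
    finally show ?thesis .
  qed
  ultimately have "ptrep sc I (pt_compress sc I e u) (\<lambda>n. a n * e) (\<lambda>n. e * b n)"
    unfolding ptrep_def using closed_ideal_mult_left[OF I e(1)] closed_ideal_mult_right[OF I e(1)]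
    by blast
  thus ?thesis
    unfolding ptensor_def pt_compress_def by auto
qed

lemma pt_compress_ptnorm_le:
  assumes sc: "cBA sc" and I: "closed_ideal sc I" and e: "e \<in> I" "e \<noteq> 0"
    and w: "pt_bounded sc UNIV w"
  shows "ptnorm sc I (pt_compress sc I e w) \<le> (norm e)\<^sup>2 * ptnorm sc UNIV w"
    and "0 \<le> ptnorm sc I (pt_compress sc I e w)"
proof -
  have bound: "cmod (pt_compress sc I e w B) \<le> (norm e)\<^sup>2 * ptnorm sc UNIV w"
    if B: "B \<in> bilball sc I" for B
    using ptnorm_upper[OF w pullback_form_bilball[OF sc I e B]] B
    by (simp add: pt_compress_def bilball_def norm_mult mult_left_mono del: of_real_power)
  thus "ptnorm sc I (pt_compress sc I e w) \<le> (norm e)\<^sup>2 * ptnorm sc UNIV w"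
    by (rule ptnorm_least)
  have "pt_bounded sc I (pt_compress sc I e w)"
    unfolding pt_bounded_def using bound by blast
  thus "0 \<le> ptnorm sc I (pt_compress sc I e w)"
    by (rule ptnorm_nonneg)
qed

lemma pt_compress_lmod:
  assumes sc: "cBA sc" and I: "closed_ideal sc I" and e: "e \<in> I" "e \<noteq> 0" and a: "a \<in> I"
  shows "lmod sc I a (pt_compress sc I e u) = pt_compress sc I e (lmod sc UNIV a u)"
proof
  fix B
  show "lmod sc I a (pt_compress sc I e u) B = pt_compress sc I e (lmod sc UNIV a u) B"
  proof (cases "B \<in> bilforms sc I")
    case True
    have "pullback_form e (\<lambda>y z. if y \<in> I \<and> z \<in> I then B (a * y) z else 0)
        = (\<lambda>y z. if y \<in> UNIV \<and> z \<in> UNIV then pullback_form e B (a * y) z else 0)"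
      using closed_ideal_mult_left[OF I e(1)] closed_ideal_mult_right[OF I e(1)]
      by (simp add: pullback_form_def mult.assoc)
    thus ?thesis
      using True lmod_form_bilforms[OF sc I a True] pullback_form_bilforms[OF sc I e True]
      by (simp add: lmod_def pt_compress_def)
  qed (simp add: lmod_def pt_compress_def)
qed

lemma pt_compress_diff: "ptdiff (pt_compress sc I e u) (pt_compress sc I e v) = pt_compress sc I e (ptdiff u v)"
  unfolding ptdiff_def pt_compress_def by (auto simp: right_diff_distrib)

lemma pt_compress_scale: "(\<lambda>B. c * pt_compress sc I e u B) = pt_compress sc I e (\<lambda>B. c * u B)"
  unfolding pt_compress_def by (auto simp: algebra_simps)

lemma pt_compress_add: "pt_compress sc I e (\<lambda>B. u B + v B) = (\<lambda>B. pt_compress sc I e u B + pt_compress sc I e v B)"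
  unfolding pt_compress_def by (auto simp: algebra_simps)

definition char_tensor :: "'a set \<Rightarrow> ('a \<Rightarrow> complex) \<Rightarrow> 'a \<Rightarrow> 'a \<Rightarrow> complex" where
  "char_tensor S \<phi> y z = (if y \<in> S \<and> z \<in> S then \<phi> y * \<phi> z else 0)"

lemma char_tensor_bilforms:
  assumes sc: "cBA sc" and \<phi>: "\<phi> \<in> characters sc UNIV" and S: "closed_ideal sc S"
  shows "char_tensor S \<phi> \<in> bilforms sc S"
proof (rule bilformsI[where K = 1])
  show "cmod (char_tensor S \<phi> x y) \<le> 1 * norm x * norm y" for x y
    using character_norm_le[OF sc \<phi>, of x] character_norm_le[OF sc \<phi>, of y]
    by (auto simp: char_tensor_def norm_mult intro: mult_mono)
qed (auto simp: char_tensor_def character_add[OF \<phi>] character_scale[OF \<phi>] algebra_simps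
       closed_ideal_add[OF S] closed_ideal_scale[OF S])

lemma character_tpi:
  assumes sc: "cBA sc" and \<phi>: "\<phi> \<in> characters sc UNIV" and S: "closed_ideal sc S"
    and u: "u \<in> ptensor sc S"
  shows "\<phi> (tpi sc S u) = u (char_tensor S \<phi>)"
proof -
  define r where "r = (SOME r. ptrep sc S u (fst r) (snd r))"
  have "\<exists>r. ptrep sc S u (fst r) (snd r)"
    using ptensor_ptrep[OF u] by auto
  hence "ptrep sc S u (fst r) (snd r)"
    unfolding r_def by (rule someI_ex)
  then obtain a b where r: "ptrep sc S u a b" and tpi: "tpi sc S u = (\<Sum>n. a n * b n)"
    unfolding tpi_def r_def[symmetric] Let_def by blast
  have ab: "a n \<in> S" "b n \<in> S" for n
    using r unfolding ptrep_def by auto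
  have "summable (\<lambda>n. norm (a n) * norm (b n))"
    using r unfolding ptrep_def by auto
  hence "summable (\<lambda>n. a n * b n)"
    by (rule summable_comparison_test[rotated]) (auto intro: norm_mult_ineq)
  hence "\<phi> (\<Sum>n. a n * b n) = (\<Sum>n. \<phi> (a n * b n))"
    by (rule bounded_linear.suminf[OF character_bounded_linear[OF sc \<phi>]])
  also have "\<dots> = (\<Sum>n. char_tensor S \<phi> (a n) (b n))"
    using ab by (simp add: char_tensor_def character_mult[OF \<phi>])
  also have "\<dots> = u (char_tensor S \<phi>)"
    using r char_tensor_bilforms[OF sc \<phi> S] unfolding ptrep_def by auto
  finally show ?thesis
    unfolding tpi .
qed

lemma pt_compress_char_tensor:
  assumes sc: "cBA sc" and \<phi>: "\<phi> \<in> characters sc UNIV" and I: "closed_ideal sc I"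
    and e: "e \<in> I" "e \<noteq> 0" "\<phi> e = 1" and u: "u \<in> ptensor sc UNIV"
  shows "pt_compress sc I e u (char_tensor I \<phi>) = u (char_tensor UNIV \<phi>)"
proof -
  obtain a b where r: "ptrep sc UNIV u a b"
    using ptensor_ptrep[OF u] by blast
  define k where "k = complex_of_real ((norm e)\<^sup>2)"
  have "k \<noteq> 0"
    using e(2) by (simp add: k_def)
  have pullback: "pullback_form e (char_tensor I \<phi>) = (\<lambda>y z. char_tensor UNIV \<phi> y z / k)"
    using closed_ideal_mult_left[OF I e(1)] closed_ideal_mult_right[OF I e(1)] e(3)
    by (simp add: pullback_form_def char_tensor_def character_mult[OF \<phi>] k_def del: of_real_power)
  have "(\<lambda>y z. char_tensor UNIV \<phi> y z / k) \<in> bilforms sc UNIV"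
    using pullback_form_bilforms[OF sc I e(1,2) char_tensor_bilforms[OF sc \<phi> I]]
    unfolding pullback .
  hence "u (pullback_form e (char_tensor I \<phi>)) = u (char_tensor UNIV \<phi>) / k"
    unfolding pullback
    by (rule ptrep_divide[OF r char_tensor_bilforms[OF sc \<phi> closed_ideal_UNIV]])
  thus ?thesis
    using char_tensor_bilforms[OF sc \<phi> I] \<open>k \<noteq> 0\<close>
    by (simp add: pt_compress_def k_def del: of_real_power)
qed

lemma tendsto_ptnorm_pt_compress:
  assumes sc: "cBA sc" and I: "closed_ideal sc I" and e: "e \<in> I" "e \<noteq> 0"
    and bounded: "eventually (\<lambda>\<rho>. pt_bounded sc UNIV (w \<rho>)) F"
    and lim: "((\<lambda>\<rho>. ptnorm sc UNIV (w \<rho>)) \<longlongrightarrow> 0) F"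
  shows "((\<lambda>\<rho>. ptnorm sc I (pt_compress sc I e (w \<rho>))) \<longlongrightarrow> 0) F"
proof (rule real_tendsto_sandwich[where f = "\<lambda>_. 0" and h = "\<lambda>\<rho>. (norm e)\<^sup>2 * ptnorm sc UNIV (w \<rho>)"])
  show "eventually (\<lambda>\<rho>. 0 \<le> ptnorm sc I (pt_compress sc I e (w \<rho>))) F"
    using bounded by eventually_elim (rule pt_compress_ptnorm_le(2)[OF sc I e])
  show "eventually (\<lambda>\<rho>. ptnorm sc I (pt_compress sc I e (w \<rho>)) \<le> (norm e)\<^sup>2 * ptnorm sc UNIV (w \<rho>)) F"
    using bounded by eventually_elim (rule pt_compress_ptnorm_le(1)[OF sc I e])
  show "((\<lambda>\<rho>. (norm e)\<^sup>2 * ptnorm sc UNIV (w \<rho>)) \<longlongrightarrow> 0) F"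
    using tendsto_mult_right_zero[OF lim] by simp
qed simp

lemma bdd_lin_pt_compress:
  assumes sc: "cBA sc" and I: "closed_ideal sc I" and e: "e \<in> I" "e \<noteq> 0"
    and \<rho>: "bdd_lin_pt sc UNIV \<rho>"
  shows "bdd_lin_pt sc I (\<lambda>x. pt_compress sc I e (\<rho> x))"
proof -
  have ptensor: "\<rho> x \<in> ptensor sc UNIV" for x
    using \<rho> unfolding bdd_lin_pt_def by blast
  obtain K where K: "\<And>x. ptnorm sc UNIV (\<rho> x) \<le> K * norm x"
    using \<rho> unfolding bdd_lin_pt_def by blast
  have "ptnorm sc I (pt_compress sc I e (\<rho> x)) \<le> ((norm e)\<^sup>2 * K) * norm x" for x
  proof -
    have "ptnorm sc I (pt_compress sc I e (\<rho> x)) \<le> (norm e)\<^sup>2 * ptnorm sc UNIV (\<rho> x)"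
      by (rule pt_compress_ptnorm_le(1)[OF sc I e pt_bounded_ptensor[OF ptensor]])
    also have "\<dots> \<le> (norm e)\<^sup>2 * (K * norm x)"
      by (intro mult_left_mono K) auto
    finally show ?thesis
      by (simp add: mult.assoc)
  qed
  thus ?thesis
    using \<rho> pt_compress_ptensor[OF sc I e ptensor]
    unfolding bdd_lin_pt_def by (auto simp: pt_compress_add pt_compress_scale)
qed

lemma tendsto_left_defect_pt_compress:
  assumes sc: "cBA sc" and I: "closed_ideal sc I" and e: "e \<in> I" "e \<noteq> 0" and a: "a \<in> I"
    and \<rho>: "eventually (bdd_lin_pt sc UNIV) F"
    and lim: "((\<lambda>\<rho>. ptnorm sc UNIV (ptdiff (lmod sc UNIV a (\<rho> x)) (\<rho> (a * x)))) \<longlongrightarrow> 0) F"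
  shows "((\<lambda>\<rho>. ptnorm sc I (ptdiff (lmod sc I a (pt_compress sc I e (\<rho> x)))
           (pt_compress sc I e (\<rho> (a * x))))) \<longlongrightarrow> 0) F"
  unfolding pt_compress_lmod[OF sc I e a] pt_compress_diff
proof (rule tendsto_ptnorm_pt_compress[OF sc I e _ lim])
  show "eventually (\<lambda>\<rho>. pt_bounded sc UNIV (ptdiff (lmod sc UNIV a (\<rho> x)) (\<rho> (a * x)))) F"
    using \<rho> by eventually_elim
      (simp add: bdd_lin_pt_def pt_bounded_diff pt_bounded_lmod[OF sc closed_ideal_UNIV] pt_bounded_ptensor)
qed

lemma tendsto_right_defect_pt_compress:
  assumes sc: "cBA sc" and I: "closed_ideal sc I" and e: "e \<in> I" "e \<noteq> 0"
    and \<rho>: "eventually (bdd_lin_pt sc UNIV) F"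
    and lim: "((\<lambda>\<rho>. ptnorm sc UNIV (ptdiff (\<rho> (x * a)) (\<lambda>B. c * \<rho> x B))) \<longlongrightarrow> 0) F"
  shows "((\<lambda>\<rho>. ptnorm sc I (ptdiff (pt_compress sc I e (\<rho> (x * a)))
           (\<lambda>B. c * pt_compress sc I e (\<rho> x) B))) \<longlongrightarrow> 0) F"
  unfolding pt_compress_scale pt_compress_diff
proof (rule tendsto_ptnorm_pt_compress[OF sc I e _ lim])
  show "eventually (\<lambda>\<rho>. pt_bounded sc UNIV (ptdiff (\<rho> (x * a)) (\<lambda>B. c * \<rho> x B))) F"
    using \<rho> by eventually_elim
      (simp add: bdd_lin_pt_def pt_bounded_diff pt_bounded_scale pt_bounded_ptensor)
qed

lemma character_tpi_pt_compress:
  assumes sc: "cBA sc" and \<phi>: "\<phi> \<in> characters sc UNIV" and I: "closed_ideal sc I"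
    and e: "e \<in> I" "e \<noteq> 0" "\<phi> e = 1" and u: "u \<in> ptensor sc UNIV"
  shows "\<phi> (tpi sc I (pt_compress sc I e u)) = \<phi> (tpi sc UNIV u)"
  using character_tpi[OF sc \<phi> I pt_compress_ptensor[OF sc I e(1,2) u]]
    character_tpi[OF sc \<phi> closed_ideal_UNIV u] pt_compress_char_tensor[OF sc \<phi> I e u]
  by simp

lemma ideal_elem_with_character_one:
  assumes \<phi>: "\<phi> \<in> characters sc UNIV" and I: "closed_ideal sc I" and "\<exists>x\<in>I. \<phi> x \<noteq> 0"
  obtains e where "e \<in> I" "e \<noteq> 0" "\<phi> e = 1"
proof -
  obtain x where x: "x \<in> I" "\<phi> x \<noteq> 0"
    using assms(3) by blast
  define e where "e = sc (1 / \<phi> x) x"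
  have "\<phi> e = 1"
    using x(2) by (simp add: e_def character_scale[OF \<phi>])
  moreover have "e \<in> I"
    unfolding e_def by (rule closed_ideal_scale[OF I x(1)])
  ultimately show thesis
    using that character_zero[OF \<phi>] by fastforce
qed

theorem proposition2p8:
  fixes sc :: "complex \<Rightarrow> 'a::{real_normed_algebra,banach} \<Rightarrow> 'a"
    and \<phi> :: "'a \<Rightarrow> complex" and I :: "'a set"
  assumes "cBA sc"
    and "\<phi> \<in> characters sc UNIV"
    and "closed_ideal sc I"
    and "\<exists>x\<in>I. \<phi> x \<noteq> 0"
    and "approx_left_biproj sc UNIV \<phi>"
  shows "approx_left_biproj sc I \<phi>"
proof -
  note sc = assms(1) and \<phi> = assms(2) and I = assms(3)
  obtain F where "F \<noteq> bot" and \<rho>: "eventually (bdd_lin_pt sc UNIV) F"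
    and lim: "\<And>a x. ((\<lambda>\<rho>. ptnorm sc UNIV (ptdiff (lmod sc UNIV a (\<rho> x)) (\<rho> (a * x)))) \<longlongrightarrow> 0) F \<and>
           ((\<lambda>\<rho>. ptnorm sc UNIV (ptdiff (\<rho> (x * a)) (\<lambda>B. \<phi> a * \<rho> x B))) \<longlongrightarrow> 0) F \<and>
           ((\<lambda>\<rho>. \<phi> (tpi sc UNIV (\<rho> x)) - \<phi> x) \<longlongrightarrow> 0) F"
    using assms(5) unfolding approx_left_biproj_def by blast
  obtain e where e: "e \<in> I" "e \<noteq> 0" "\<phi> e = 1"
    using ideal_elem_with_character_one[OF \<phi> I assms(4)] .
  define G where "G \<rho> = (\<lambda>x. pt_compress sc I e (\<rho> x))" for \<rho> :: "'a \<Rightarrow> ('a \<Rightarrow> 'a \<Rightarrow> complex) \<Rightarrow> complex"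
  show ?thesis
    unfolding approx_left_biproj_def
  proof (intro exI[of _ "filtermap G F"] conjI ballI)
    show "filtermap G F \<noteq> bot"
      using \<open>F \<noteq> bot\<close> by (simp add: filtermap_bot_iff)
    show "eventually (bdd_lin_pt sc I) (filtermap G F)"
      using \<rho> unfolding eventually_filtermap G_def
      by (rule eventually_mono) (rule bdd_lin_pt_compress[OF sc I e(1,2)])
    fix a x
    assume "a \<in> I" "x \<in> I"
    show "((\<lambda>\<rho>. ptnorm sc I (ptdiff (lmod sc I a (\<rho> x)) (\<rho> (a * x)))) \<longlongrightarrow> 0) (filtermap G F)"
      using tendsto_left_defect_pt_compress[OF sc I e(1,2) \<open>a \<in> I\<close> \<rho>] lim
      by (simp add: filterlim_filtermap G_def)
    show "((\<lambda>\<rho>. ptnorm sc I (ptdiff (\<rho> (x * a)) (\<lambda>B. \<phi> a * \<rho> x B))) \<longlongrightarrow> 0) (filtermap G F)"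
      using tendsto_right_defect_pt_compress[OF sc I e(1,2) \<rho>] lim
      by (simp add: filterlim_filtermap G_def)
    have "eventually (\<lambda>\<rho>. \<phi> (tpi sc UNIV (\<rho> x)) - \<phi> x = \<phi> (tpi sc I (G \<rho> x)) - \<phi> x) F"
      using \<rho> by eventually_elim
        (simp add: G_def bdd_lin_pt_def character_tpi_pt_compress[OF sc \<phi> I e])
    thus "((\<lambda>\<rho>. \<phi> (tpi sc I (\<rho> x)) - \<phi> x) \<longlongrightarrow> 0) (filtermap G F)"
      unfolding filterlim_filtermap
      using lim[of a x, THEN conjunct2, THEN conjunct2] by (rule tendsto_cong[THEN iffD1])
  qed
qed

end
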